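(* Let $X$ be a finite $T_0$ topological space, $\mathcal V$ a multivector field on $X$ with $X$ invariant, $\mathcal M=\{M_p\mid p\in\mathbb P\}$ a Morse predecomposition of $X$, and $\le$ an admissible preorder on $\mathbb P$. Then for every $\mathbb Q\subset\mathbb P$ the set $M_{\mathbb Q}$ is a saturated isolated invariant set. Moreover, if $\mathbb Q$ is convex with respect to $\le$, then $M_{\mathbb Q}\cap M_r=\emptyset$ for all $r\in\mathbb P\setminus\mathbb Q$.
   Context: Notation: $\operatorname{cl}$ is closure; $A\subset X$ is locally closed if $\operatorname{cl}A\setminus A$ is closed. A multivector field $\mathcal V$ on $X$ is a partition of $X$ into locally closed sets (multivectors); $[x]_{\mathcal V}$ is the multivector containing $x$. A multivector $V$ is critical if $H(\operatorname{cl}V,\operatorname{cl}V\setminus V)$ (relative singular homology) is nontrivial, regular otherwise. $A$ is $\mathcal V$-compatible if it is a union of multivectors; $\langle A\rangle_{\mathcal V}$ is the smallest locally closed $\mathcal V$-compatible set containing $A$. $\Pi_{\mathcal V}(x)=\operatorname{cl}\{x\}\cup[x]_{\mathcal V}$. A solution is a partial map $\gamma:\mathbb Z\nrightarrow X$ with domain an integer interval and $\gamma(t+1)\in\Pi_{\mathcal V}(\gamma(t))$; a path has finite domain; a full solution has domain $\mathbb Z$. $\alpha(\gamma)=\langle\bigcap_{t\le0}\gamma((-\infty,t])\rangle_{\mathcal V}$, $\omega(\gamma)=\langle\bigcap_{t\ge0}\gamma([t,\infty))\rangle_{\mathcal V}$. A full solution is essential unless $\alpha(\gamma)$ or $\omega(\gamma)$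 lies in a single regular multivector; an essential solution in $A$ has image in $A$. $\operatorname{Inv}S$ is the set of $x\in S$ with an essential solution $\gamma$ in $S$, $\gamma(0)=x$; $S$ is invariant if $\operatorname{Inv}S=S$. An invariant $S$ is isolated invariant if there is a closed $N\supset\Pi_{\mathcal V}(S)$ such that every path in $N$ with endpoints in $S$ has image in $S$. A link from $S_1$ to $S_2$ is a full solution with $\alpha(\gamma)\cap S_1\ne\emptyset\ne\omega(\gamma)\cap S_2$. A Morse predecomposition of $X$ is an indexed family $\{M_p\mid p\in\mathbb P\}$ of mutually disjoint isolated invariant subsets such that every essential solution in $X$ is a link from some $M_p$ to some $M_q$. A preorder $\le$ on $\mathbb P$ is admissible if a link from $M_p$ to $M_q$ implies $q\le p$; $\mathbb Q$ is convex w.r.t. $\le$ if $p\le r\le q$, $p,q\in\mathbb Q$ imply $r\in\mathbb Q$. An invariant $T\subset X$ is saturated if every essential solution $\gamma$ in $X$ with $\alpha(\gamma)\cup\omega(\gamma)\subset T$ has $\operatorname{im}\gamma\subset T$. $\mathbb P_C=\{p\mid M_p\cap C\ne\emptyset\}$; $\operatorname{eSol}_{\mathbb Q}(X)$ is the set of essential solutions $\gamma$ in $X$ with $\mathbb P_{\alpha(\gamma)}\cap\mathbb Q\ne\emptyset\ne\mathbb P_{\omega(\gamma)}\cap\mathbb Q$; $M_{\mathbb Q}=\bigcup\{\operatorname{im}\gamma\mid\gamma\in\operatorname{eSol}_{\mathbb Q}(X)\}$. *)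

theory Defs
  imports "HOL-Analysis.Analysis" "HOL-Homology.Homology"
begin

definition locally_closed_in :: "'a topology \<Rightarrow> 'a set \<Rightarrow> bool" where
  "locally_closed_in X A \<longleftrightarrow> closedin X (X closure_of A - A)"

definition multivector_field :: "'a topology \<Rightarrow> 'a set set \<Rightarrow> bool" where
  "multivector_field X V \<longleftrightarrow>
     (\<forall>A\<in>V. A \<noteq> {} \<and> A \<subseteq> topspace X \<and> locally_closed_in X A) \<and>
     (\<forall>A\<in>V. \<forall>B\<in>V. A \<noteq> B \<longrightarrow> A \<inter> B = {}) \<and>
     \<Union>V = topspace X"

definition mv_of :: "'a set set \<Rightarrow> 'a \<Rightarrow> 'a set" where
  "mv_of V x = (THE A. A \<in> V \<and> x \<in> A)"

definition critical_mv :: "'a topology \<Rightarrow> 'a set \<Rightarrow> bool" where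
  "critical_mv X A \<longleftrightarrow>
     (\<exists>p. \<not> trivial_group
             (relative_homology_group p (subtopology X (X closure_of A)) (X closure_of A - A)))"

definition regular_mv :: "'a topology \<Rightarrow> 'a set \<Rightarrow> bool" where
  "regular_mv X A \<longleftrightarrow> \<not> critical_mv X A"

definition compatible :: "'a set set \<Rightarrow> 'a set \<Rightarrow> bool" where
  "compatible V A \<longleftrightarrow> (\<exists>W \<subseteq> V. A = \<Union>W)"

definition lc_hull :: "'a topology \<Rightarrow> 'a set set \<Rightarrow> 'a set \<Rightarrow> 'a set" where
  "lc_hull X V A = \<Inter>{B. A \<subseteq> B \<and> B \<subseteq> topspace X \<and> locally_closed_in X B \<and> compatible V B}"

definition Pi_mv :: "'a topology \<Rightarrow> 'a set set \<Rightarrow> 'a \<Rightarrow> 'a set" where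
  "Pi_mv X V x = X closure_of {x} \<union> mv_of V x"

definition Pi_mv_set :: "'a topology \<Rightarrow> 'a set set \<Rightarrow> 'a set \<Rightarrow> 'a set" where
  "Pi_mv_set X V S = (\<Union>x\<in>S. Pi_mv X V x)"

definition is_path :: "'a topology \<Rightarrow> 'a set set \<Rightarrow> (int \<Rightarrow> 'a) \<Rightarrow> int \<Rightarrow> int \<Rightarrow> bool" where
  "is_path X V \<gamma> a b \<longleftrightarrow> a \<le> b \<and> (\<forall>t\<in>{a..b}. \<gamma> t \<in> topspace X) \<and>
     (\<forall>t\<in>{a..<b}. \<gamma> (t + 1) \<in> Pi_mv X V (\<gamma> t))"

definition full_solution :: "'a topology \<Rightarrow> 'a set set \<Rightarrow> (int \<Rightarrow> 'a) \<Rightarrow> bool" where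
  "full_solution X V \<gamma> \<longleftrightarrow> (\<forall>t. \<gamma> t \<in> topspace X \<and> \<gamma> (t + 1) \<in> Pi_mv X V (\<gamma> t))"

definition alpha_limit :: "'a topology \<Rightarrow> 'a set set \<Rightarrow> (int \<Rightarrow> 'a) \<Rightarrow> 'a set" where
  "alpha_limit X V \<gamma> = lc_hull X V (\<Inter>t\<in>{..0}. \<gamma> ` {..t})"

definition omega_limit :: "'a topology \<Rightarrow> 'a set set \<Rightarrow> (int \<Rightarrow> 'a) \<Rightarrow> 'a set" where
  "omega_limit X V \<gamma> = lc_hull X V (\<Inter>t\<in>{0..}. \<gamma> ` {t..})"

definition in_single_regular_mv :: "'a topology \<Rightarrow> 'a set set \<Rightarrow> 'a set \<Rightarrow> bool" where
  "in_single_regular_mv X V C \<longleftrightarrow> (\<exists>A\<in>V. regular_mv X A \<and> C \<subseteq> A)"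

definition essential :: "'a topology \<Rightarrow> 'a set set \<Rightarrow> (int \<Rightarrow> 'a) \<Rightarrow> bool" where
  "essential X V \<gamma> \<longleftrightarrow> full_solution X V \<gamma> \<and>
     \<not> (in_single_regular_mv X V (alpha_limit X V \<gamma>) \<or>
        in_single_regular_mv X V (omega_limit X V \<gamma>))"

definition Inv :: "'a topology \<Rightarrow> 'a set set \<Rightarrow> 'a set \<Rightarrow> 'a set" where
  "Inv X V S = {x \<in> S. \<exists>\<gamma>. essential X V \<gamma> \<and> range \<gamma> \<subseteq> S \<and> \<gamma> 0 = x}"

definition invariant :: "'a topology \<Rightarrow> 'a set set \<Rightarrow> 'a set \<Rightarrow> bool" where
  "invariant X V S \<longleftrightarrow> Inv X V S = S"

definition isolated_invariant :: "'a topology \<Rightarrow> 'a set set \<Rightarrow> 'a set \<Rightarrow> bool" where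
  "isolated_invariant X V S \<longleftrightarrow> invariant X V S \<and>
     (\<exists>N. closedin X N \<and> Pi_mv_set X V S \<subseteq> N \<and>
        (\<forall>\<gamma> a b. is_path X V \<gamma> a b \<and> \<gamma> ` {a..b} \<subseteq> N \<and> \<gamma> a \<in> S \<and> \<gamma> b \<in> S
                    \<longrightarrow> \<gamma> ` {a..b} \<subseteq> S))"

definition is_link :: "'a topology \<Rightarrow> 'a set set \<Rightarrow> (int \<Rightarrow> 'a) \<Rightarrow> 'a set \<Rightarrow> 'a set \<Rightarrow> bool" where
  "is_link X V \<gamma> S1 S2 \<longleftrightarrow> full_solution X V \<gamma> \<and>
     alpha_limit X V \<gamma> \<inter> S1 \<noteq> {} \<and> omega_limit X V \<gamma> \<inter> S2 \<noteq> {}"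

definition morse_predecomposition ::
  "'a topology \<Rightarrow> 'a set set \<Rightarrow> 'p set \<Rightarrow> ('p \<Rightarrow> 'a set) \<Rightarrow> bool" where
  "morse_predecomposition X V P M \<longleftrightarrow>
     (\<forall>p\<in>P. \<forall>q\<in>P. p \<noteq> q \<longrightarrow> M p \<inter> M q = {}) \<and>
     (\<forall>p\<in>P. M p \<subseteq> topspace X \<and> isolated_invariant X V (M p)) \<and>
     (\<forall>\<gamma>. essential X V \<gamma> \<and> range \<gamma> \<subseteq> topspace X \<longrightarrow>
        (\<exists>p\<in>P. \<exists>q\<in>P. is_link X V \<gamma> (M p) (M q)))"

definition admissible_preorder ::
  "'a topology \<Rightarrow> 'a set set \<Rightarrow> 'p set \<Rightarrow> ('p \<Rightarrow> 'a set) \<Rightarrow> ('p \<Rightarrow> 'p \<Rightarrow> bool) \<Rightarrow> bool" where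
  "admissible_preorder X V P M leq \<longleftrightarrow>
     (\<forall>p\<in>P. leq p p) \<and>
     (\<forall>p\<in>P. \<forall>q\<in>P. \<forall>r\<in>P. leq p q \<and> leq q r \<longrightarrow> leq p r) \<and>
     (\<forall>p\<in>P. \<forall>q\<in>P. (\<exists>\<gamma>. is_link X V \<gamma> (M p) (M q)) \<longrightarrow> leq q p)"

definition convex_wrt :: "'p set \<Rightarrow> ('p \<Rightarrow> 'p \<Rightarrow> bool) \<Rightarrow> 'p set \<Rightarrow> bool" where
  "convex_wrt P leq Q \<longleftrightarrow> (\<forall>p\<in>Q. \<forall>q\<in>Q. \<forall>r\<in>P. leq p r \<and> leq r q \<longrightarrow> r \<in> Q)"

definition saturated :: "'a topology \<Rightarrow> 'a set set \<Rightarrow> 'a set \<Rightarrow> bool" where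
  "saturated X V T \<longleftrightarrow> T \<subseteq> topspace X \<and> invariant X V T \<and>
     (\<forall>\<gamma>. essential X V \<gamma> \<and> range \<gamma> \<subseteq> topspace X \<and>
          alpha_limit X V \<gamma> \<union> omega_limit X V \<gamma> \<subseteq> T \<longrightarrow> range \<gamma> \<subseteq> T)"

definition P_meet :: "'p set \<Rightarrow> ('p \<Rightarrow> 'a set) \<Rightarrow> 'a set \<Rightarrow> 'p set" where
  "P_meet P M C = {p \<in> P. M p \<inter> C \<noteq> {}}"

definition eSol :: "'a topology \<Rightarrow> 'a set set \<Rightarrow> 'p set \<Rightarrow> ('p \<Rightarrow> 'a set) \<Rightarrow> 'p set \<Rightarrow> (int \<Rightarrow> 'a) set" where
  "eSol X V P M Q = {\<gamma>. essential X V \<gamma> \<and> range \<gamma> \<subseteq> topspace X \<and>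
      P_meet P M (alpha_limit X V \<gamma>) \<inter> Q \<noteq> {} \<and> P_meet P M (omega_limit X V \<gamma>) \<inter> Q \<noteq> {}}"

definition M_Q :: "'a topology \<Rightarrow> 'a set set \<Rightarrow> 'p set \<Rightarrow> ('p \<Rightarrow> 'a set) \<Rightarrow> 'p set \<Rightarrow> 'a set" where
  "M_Q X V P M Q = (\<Union>\<gamma>\<in>eSol X V P M Q. range \<gamma>)"

end

theory Submission
  imports Defs
begin

text \<open>
  Solutions can be glued: following r up to time s, then a path from r s to q u, then q from
  time u on gives a full solution with the \<alpha>-limit of r and the \<omega>-limit of q. Gluing two
  members of eSol_Q along a path therefore stays in eSol_Q, so every path with endpoints in M_Q
  lies in M_Q. This makes M_Q isolated (with the whole space as isolating set) and, because on a
  finite space a solution returns infinitely often in the past and in the future to some point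
  of its \<alpha>- and \<omega>-limit, saturated. If x \<in> M_Q \<inter> M_r, glue a solution of eSol_Q through x
  to an essential solution through x inside M_r, in both orders: this gives links from some
  M_p to M_r and from M_r to some M_q with p, q \<in> Q, hence q \<le> r \<le> p, and r \<in> Q when Q is
  convex.
\<close>

definition alpha_points :: "(int \<Rightarrow> 'a) \<Rightarrow> 'a set" where
  "alpha_points g = {x. \<forall>t. \<exists>u\<le>t. g u = x}"

definition omega_points :: "(int \<Rightarrow> 'a) \<Rightarrow> 'a set" where
  "omega_points g = {x. \<forall>t. \<exists>u\<ge>t. g u = x}"

lemma omega_points_reflect: "omega_points g = alpha_points (\<lambda>t. g (- t))"
proof (intro equalityI subsetI)
  fix x assume "x \<in> omega_points g"
  then have x: "\<exists>u\<ge>t. g u = x" for t unfolding omega_points_def by blast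
  have "\<exists>u\<le>t. g (- u) = x" for t
  proof -
    obtain u where "- t \<le> u" "g u = x" using x by blast
    then show ?thesis by (intro exI[of _ "- u"]) auto
  qed
  then show "x \<in> alpha_points (\<lambda>t. g (- t))" unfolding alpha_points_def by blast
next
  fix x assume "x \<in> alpha_points (\<lambda>t. g (- t))"
  then have x: "\<exists>u\<le>t. g (- u) = x" for t unfolding alpha_points_def by blast
  have "\<exists>u\<ge>t. g u = x" for t
  proof -
    obtain u where "u \<le> - t" "g (- u) = x" using x by blast
    then show ?thesis by (intro exI[of _ "- u"]) auto
  qed
  then show "x \<in> omega_points g" unfolding omega_points_def by blast
qed

lemma alpha_limit_eq_lc_hull: "alpha_limit X V g = lc_hull X V (alpha_points g)"
proof -
  have "(\<Inter>t\<in>{..0}. g ` {..t}) = alpha_points g"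
  proof (intro equalityI subsetI)
    fix x assume x: "x \<in> (\<Inter>t\<in>{..0}. g ` {..t})"
    have "\<exists>u\<le>t. g u = x" for t
    proof -
      have "x \<in> g ` {..min t 0}" using x by simp
      then show ?thesis by auto
    qed
    then show "x \<in> alpha_points g" unfolding alpha_points_def by blast
  qed (auto simp: alpha_points_def)
  then show ?thesis unfolding alpha_limit_def by simp
qed

lemma omega_limit_eq_lc_hull: "omega_limit X V g = lc_hull X V (omega_points g)"
proof -
  have "(\<Inter>t\<in>{0..}. g ` {t..}) = omega_points g"
  proof (intro equalityI subsetI)
    fix x assume x: "x \<in> (\<Inter>t\<in>{0..}. g ` {t..})"
    have "\<exists>u\<ge>t. g u = x" for t
    proof -
      have "x \<in> g ` {max t 0..}" using x by simp
      then show ?thesis by auto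
    qed
    then show "x \<in> omega_points g" unfolding omega_points_def by blast
  qed (auto simp: omega_points_def)
  then show ?thesis unfolding omega_limit_def by simp
qed

lemma alpha_points_eq_if_eventually_shift:
  assumes "\<forall>t\<le>a. g t = r (t + c)"
  shows "alpha_points g = alpha_points r"
proof (intro equalityI subsetI)
  fix x assume "x \<in> alpha_points g"
  then have x: "\<exists>u\<le>t. g u = x" for t by (simp add: alpha_points_def)
  have "\<exists>u\<le>t. r u = x" for t
  proof -
    obtain u where "u \<le> min (t - c) a" "g u = x" using x by blast
    then show ?thesis using assms by (intro exI[of _ "u + c"]) auto
  qed
  then show "x \<in> alpha_points r" by (simp add: alpha_points_def)
next
  fix x assume "x \<in> alpha_points r"
  then have x: "\<exists>v\<le>t. r v = x" for t by (simp add: alpha_points_def)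
  have "\<exists>u\<le>t. g u = x" for t
  proof -
    obtain v where "v \<le> min (t + c) (a + c)" "r v = x" using x by blast
    then show ?thesis using assms by (intro exI[of _ "v - c"]) auto
  qed
  then show "x \<in> alpha_points g" by (simp add: alpha_points_def)
qed

lemma omega_points_eq_if_eventually_shift:
  assumes "\<forall>t\<ge>a. g t = r (t + c)"
  shows "omega_points g = omega_points r"
  unfolding omega_points_reflect
  by (rule alpha_points_eq_if_eventually_shift[where a="- a" and c="- c"]) (simp add: assms)

lemma alpha_points_nonempty:
  assumes "finite (range g)"
  shows "alpha_points g \<noteq> {}"
proof
  assume "alpha_points g = {}"
  then have "\<exists>t. \<forall>u\<le>t. g u \<noteq> x" for x unfolding alpha_points_def by blast
  then obtain last :: "'a \<Rightarrow> int" where last: "\<And>x u. u \<le> last x \<Longrightarrow> g u \<noteq> x" by metis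
  define m where "m = Min (last ` range g)"
  have "m \<le> last (g m)" unfolding m_def using assms by simp
  then show False using last by blast
qed

lemma omega_points_nonempty: "finite (range g) \<Longrightarrow> omega_points g \<noteq> {}"
  unfolding omega_points_reflect
  by (rule alpha_points_nonempty) (use image_image[of g uminus UNIV] in simp)

lemma alpha_points_subset_range: "alpha_points g \<subseteq> range g"
  unfolding alpha_points_def by auto

lemma omega_points_subset_range: "omega_points g \<subseteq> range g"
  unfolding omega_points_def by auto

lemma subset_lc_hull: "A \<subseteq> lc_hull X V A"
  unfolding lc_hull_def by auto

lemma alpha_limit_meets:
  assumes "finite (range g)" "range g \<subseteq> S"
  shows "alpha_limit X V g \<inter> S \<noteq> {}"
  using alpha_points_nonempty[OF assms(1)] alpha_points_subset_range[of g] assms(2)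
    subset_lc_hull[of "alpha_points g" X V]
  unfolding alpha_limit_eq_lc_hull by blast

lemma omega_limit_meets:
  assumes "finite (range g)" "range g \<subseteq> S"
  shows "omega_limit X V g \<inter> S \<noteq> {}"
  using omega_points_nonempty[OF assms(1)] omega_points_subset_range[of g] assms(2)
    subset_lc_hull[of "omega_points g" X V]
  unfolding omega_limit_eq_lc_hull by blast

definition concat_solutions ::
  "(int \<Rightarrow> 'a) \<Rightarrow> int \<Rightarrow> (int \<Rightarrow> 'a) \<Rightarrow> int \<Rightarrow> int \<Rightarrow> (int \<Rightarrow> 'a) \<Rightarrow> int \<Rightarrow> int \<Rightarrow> 'a" where
  "concat_solutions r s g a b q u t =
     (if t \<le> a then r (t - a + s) else if t \<le> b then g t else q (t - b + u))"

lemma alpha_limit_concat: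
  "alpha_limit X V (concat_solutions r s g a b q u) = alpha_limit X V r"
  unfolding alpha_limit_eq_lc_hull
  by (subst alpha_points_eq_if_eventually_shift[where a = a and c = "s - a"])
    (auto simp: concat_solutions_def algebra_simps)

lemma omega_limit_concat:
  "a \<le> b \<Longrightarrow> omega_limit X V (concat_solutions r s g a b q u) = omega_limit X V q"
  unfolding omega_limit_eq_lc_hull
  by (subst omega_points_eq_if_eventually_shift[where a = "b + 1" and c = "u - b"])
    (auto simp: concat_solutions_def algebra_simps)

lemma full_solution_concat:
  assumes r: "full_solution X V r" and q: "full_solution X V q" and g: "is_path X V g a b"
    and "r s = g a" "g b = q u"
  shows "full_solution X V (concat_solutions r s g a b q u)"
  unfolding full_solution_def
proof
  fix t
  let ?h = "concat_solutions r s g a b q u"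
  have "a \<le> b" using g by (simp add: is_path_def)
  then consider "t + 1 \<le> a" | "a \<le> t" "t < b" | "b \<le> t" by linarith
  then show "?h t \<in> topspace X \<and> ?h (t + 1) \<in> Pi_mv X V (?h t)"
  proof cases
    case 1
    then have "?h t = r (t - a + s)" "?h (t + 1) = r ((t - a + s) + 1)"
      by (auto simp: concat_solutions_def algebra_simps)
    then show ?thesis using r by (simp add: full_solution_def)
  next
    case 2
    then have "?h t = g t" "?h (t + 1) = g (t + 1)"
      using \<open>r s = g a\<close> by (auto simp: concat_solutions_def)
    then show ?thesis using 2 g by (simp add: is_path_def)
  next
    case 3
    then have "?h t = q (t - b + u)" "?h (t + 1) = q ((t - b + u) + 1)"
      using \<open>a \<le> b\<close> \<open>r s = g a\<close> \<open>g b = q u\<close>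
      by (auto simp: concat_solutions_def algebra_simps)
    then show ?thesis using q by (simp add: full_solution_def)
  qed
qed

lemma essential_concat:
  assumes "essential X V r" "essential X V q" "is_path X V g a b" "r s = g a" "g b = q u"
  shows "essential X V (concat_solutions r s g a b q u)"
  using assms full_solution_concat[of X V r q g a b s u]
  by (simp add: essential_def alpha_limit_concat omega_limit_concat is_path_def)

lemma path_image_subset_range_concat:
  assumes "r s = g a"
  shows "g ` {a..b} \<subseteq> range (concat_solutions r s g a b q u)"
proof
  fix y assume "y \<in> g ` {a..b}"
  then obtain t where "a \<le> t" "t \<le> b" "y = g t" by auto
  then have "concat_solutions r s g a b q u t = y"
    using assms by (cases "t = a") (auto simp: concat_solutions_def)
  then show "y \<in> range (concat_solutions r s g a b q u)" by (metis rangeI)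
qed

lemma constant_path: "x \<in> topspace X \<Longrightarrow> is_path X V (\<lambda>_. x) a a"
  by (simp add: is_path_def)

lemma full_solution_join:
  assumes "full_solution X V r" "full_solution X V q" "r s = q u"
  obtains h where "full_solution X V h"
    "alpha_limit X V h = alpha_limit X V r" "omega_limit X V h = omega_limit X V q"
proof
  let ?h = "concat_solutions r s (\<lambda>_. q u) 0 0 q u"
  have "q u \<in> topspace X" using assms(2) by (simp add: full_solution_def)
  then show "full_solution X V ?h"
    using assms by (intro full_solution_concat constant_path) auto
  show "alpha_limit X V ?h = alpha_limit X V r" by (rule alpha_limit_concat)
  show "omega_limit X V ?h = omega_limit X V q" by (rule omega_limit_concat) simp
qed

lemma essential_shift:
  assumes "essential X V g"
  shows "essential X V (\<lambda>t. g (t + c))"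
proof -
  have "alpha_points (\<lambda>t. g (t + c)) = alpha_points g"
    by (rule alpha_points_eq_if_eventually_shift[where a = 0 and c = c]) simp
  moreover have "omega_points (\<lambda>t. g (t + c)) = omega_points g"
    by (rule omega_points_eq_if_eventually_shift[where a = 0 and c = c]) simp
  moreover have "full_solution X V (\<lambda>t. g (t + c))"
    using assms unfolding essential_def full_solution_def by (metis add.commute add.left_commute)
  ultimately show ?thesis
    using assms by (simp add: essential_def alpha_limit_eq_lc_hull omega_limit_eq_lc_hull)
qed

lemma range_subset_M_Q: "g \<in> eSol X V P M Q \<Longrightarrow> range g \<subseteq> M_Q X V P M Q"
  unfolding M_Q_def by auto

lemma M_Q_subset_topspace: "M_Q X V P M Q \<subseteq> topspace X"
  unfolding M_Q_def eSol_def by auto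

lemma eSol_concat:
  assumes "r \<in> eSol X V P M Q" "q \<in> eSol X V P M Q" "is_path X V g a b" "r s = g a" "g b = q u"
  shows "concat_solutions r s g a b q u \<in> eSol X V P M Q"
proof -
  have "essential X V (concat_solutions r s g a b q u)"
    using assms by (intro essential_concat) (auto simp: eSol_def)
  then show ?thesis
    using assms
    by (auto simp: eSol_def essential_def full_solution_def is_path_def
        alpha_limit_concat omega_limit_concat)
qed

lemma path_image_subset_M_Q:
  assumes "is_path X V g a b" "g a \<in> M_Q X V P M Q" "g b \<in> M_Q X V P M Q"
  shows "g ` {a..b} \<subseteq> M_Q X V P M Q"
proof -
  obtain r s where r: "r \<in> eSol X V P M Q" "r s = g a" using assms(2) unfolding M_Q_def by auto
  obtain q u where q: "q \<in> eSol X V P M Q" "q u = g b" using assms(3) unfolding M_Q_def by auto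
  have "concat_solutions r s g a b q u \<in> eSol X V P M Q"
    using r q assms(1) by (intro eSol_concat) auto
  then show ?thesis
    using path_image_subset_range_concat[of r s g a b q u] r range_subset_M_Q by blast
qed

lemma invariant_M_Q: "invariant X V (M_Q X V P M Q)"
  unfolding invariant_def Inv_def
proof (intro equalityI subsetI)
  fix x assume x: "x \<in> M_Q X V P M Q"
  then obtain g t where g: "g \<in> eSol X V P M Q" "g t = x" unfolding M_Q_def by auto
  have "essential X V (\<lambda>u. g (u + t))"
    using g by (intro essential_shift) (simp add: eSol_def)
  moreover have "range (\<lambda>u. g (u + t)) \<subseteq> M_Q X V P M Q"
    using range_subset_M_Q[OF g(1)] by auto
  ultimately show "x \<in> {x \<in> M_Q X V P M Q. \<exists>\<gamma>. essential X V \<gamma> \<and> range \<gamma> \<subseteq> M_Q X V P M Q \<and> \<gamma> 0 = x}"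
    using x g(2) by force
qed auto

lemma saturated_M_Q:
  assumes "finite (topspace X)"
  shows "saturated X V (M_Q X V P M Q)"
  unfolding saturated_def
proof (intro conjI allI impI M_Q_subset_topspace invariant_M_Q subsetI)
  fix g y
  assume "essential X V g \<and> range g \<subseteq> topspace X \<and>
    alpha_limit X V g \<union> omega_limit X V g \<subseteq> M_Q X V P M Q"
  then have g: "essential X V g" "range g \<subseteq> topspace X"
    and limits: "alpha_limit X V g \<subseteq> M_Q X V P M Q" "omega_limit X V g \<subseteq> M_Q X V P M Q"
    by auto
  have "finite (range g)" using assms g(2) by (rule finite_subset[rotated])
  obtain x0 y0 where "x0 \<in> alpha_points g" "y0 \<in> omega_points g"
    using alpha_points_nonempty[OF \<open>finite (range g)\<close>]
      omega_points_nonempty[OF \<open>finite (range g)\<close>] by blast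
  then have "x0 \<in> M_Q X V P M Q" "y0 \<in> M_Q X V P M Q"
    using limits subset_lc_hull[of "alpha_points g" X V] subset_lc_hull[of "omega_points g" X V]
    unfolding alpha_limit_eq_lc_hull omega_limit_eq_lc_hull by auto
  assume "y \<in> range g"
  then obtain \<tau> where "y = g \<tau>" by auto
  have "\<exists>t\<le>\<tau>. g t = x0" "\<exists>t'\<ge>\<tau>. g t' = y0"
    using \<open>x0 \<in> alpha_points g\<close> \<open>y0 \<in> omega_points g\<close>
    by (simp_all add: alpha_points_def omega_points_def)
  then obtain t t' where "t \<le> \<tau>" "g t = x0" "\<tau> \<le> t'" "g t' = y0" by blast
  moreover have "is_path X V g t t'"
    using g(1) \<open>t \<le> \<tau>\<close> \<open>\<tau> \<le> t'\<close> by (simp add: essential_def full_solution_def is_path_def)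
  ultimately have "g ` {t..t'} \<subseteq> M_Q X V P M Q"
    using \<open>x0 \<in> M_Q X V P M Q\<close> \<open>y0 \<in> M_Q X V P M Q\<close> by (intro path_image_subset_M_Q) auto
  then show "y \<in> M_Q X V P M Q"
    using \<open>y = g \<tau>\<close> \<open>t \<le> \<tau>\<close> \<open>\<tau> \<le> t'\<close> by auto
qed

lemma mv_of_mem:
  assumes "multivector_field X V" "x \<in> topspace X"
  shows "mv_of V x \<in> V \<and> x \<in> mv_of V x"
proof -
  have cover: "\<Union>V = topspace X" and disjoint: "\<forall>A\<in>V. \<forall>B\<in>V. A \<noteq> B \<longrightarrow> A \<inter> B = {}"
    using assms(1) unfolding multivector_field_def by auto
  obtain A where "A \<in> V" "x \<in> A" using cover assms(2) by blast
  then have "\<exists>!A. A \<in> V \<and> x \<in> A" using disjoint by auto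
  then show ?thesis unfolding mv_of_def by (rule theI')
qed

lemma Pi_mv_set_subset_topspace:
  assumes "multivector_field X V" "S \<subseteq> topspace X"
  shows "Pi_mv_set X V S \<subseteq> topspace X"
  unfolding Pi_mv_set_def Pi_mv_def
proof (rule UN_least)
  fix x assume "x \<in> S"
  then have "x \<in> topspace X" using assms(2) by (rule subsetD[rotated])
  then have "mv_of V x \<in> V" using mv_of_mem[OF assms(1)] by simp
  moreover have "\<forall>A\<in>V. A \<subseteq> topspace X"
    using assms(1) unfolding multivector_field_def by auto
  ultimately have "mv_of V x \<subseteq> topspace X" by blast
  then show "X closure_of {x} \<union> mv_of V x \<subseteq> topspace X"
    by (intro Un_least closure_of_subset_topspace)
qed

lemma isolated_invariant_M_Q:
  assumes "multivector_field X V"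
  shows "isolated_invariant X V (M_Q X V P M Q)"
  unfolding isolated_invariant_def
proof (intro conjI invariant_M_Q exI[of _ "topspace X"] allI impI)
  show "Pi_mv_set X V (M_Q X V P M Q) \<subseteq> topspace X"
    using assms M_Q_subset_topspace by (rule Pi_mv_set_subset_topspace)
  fix g a b
  assume "is_path X V g a b \<and> g ` {a..b} \<subseteq> topspace X \<and>
    g a \<in> M_Q X V P M Q \<and> g b \<in> M_Q X V P M Q"
  then show "g ` {a..b} \<subseteq> M_Q X V P M Q" by (intro path_image_subset_M_Q) auto
qed simp

lemma M_Q_disjoint_if_convex:
  assumes "finite (topspace X)" "morse_predecomposition X V P M"
    and adm: "admissible_preorder X V P M leq"
    and "convex_wrt P leq Q" "Q \<subseteq> P" "r \<in> P - Q"
  shows "M_Q X V P M Q \<inter> M r = {}"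
proof (rule ccontr)
  assume "M_Q X V P M Q \<inter> M r \<noteq> {}"
  then obtain x where x: "x \<in> M_Q X V P M Q" "x \<in> M r" by blast
  then obtain g \<tau> where g: "g \<in> eSol X V P M Q" "g \<tau> = x" unfolding M_Q_def by blast
  then obtain p q where p: "p \<in> Q" "M p \<inter> alpha_limit X V g \<noteq> {}"
    and q: "q \<in> Q" "M q \<inter> omega_limit X V g \<noteq> {}"
    unfolding eSol_def P_meet_def by blast
  have "invariant X V (M r)"
    using assms(2,6) unfolding morse_predecomposition_def isolated_invariant_def by blast
  then have "x \<in> Inv X V (M r)" using x(2) unfolding invariant_def by simp
  then obtain e where e: "essential X V e" "range e \<subseteq> M r" "e 0 = x"
    unfolding Inv_def by blast
  have full: "full_solution X V g" "full_solution X V e"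
    using g(1) e(1) by (simp_all add: eSol_def essential_def)
  then have "finite (range e)"
    using assms(1) by (metis finite_subset full_solution_def image_subset_iff)
  have "leq r p"
  proof -
    obtain h where "full_solution X V h"
      "alpha_limit X V h = alpha_limit X V g" "omega_limit X V h = omega_limit X V e"
      using full_solution_join[OF full] g(2) e(3) by metis
    then have "is_link X V h (M p) (M r)"
      using p(2) omega_limit_meets[OF \<open>finite (range e)\<close> e(2)]
      unfolding is_link_def by blast
    then show ?thesis using adm p(1) assms(5,6) unfolding admissible_preorder_def by blast
  qed
  moreover have "leq q r"
  proof -
    obtain h where "full_solution X V h"
      "alpha_limit X V h = alpha_limit X V e" "omega_limit X V h = omega_limit X V g"
      using full_solution_join[of X V e g 0 \<tau>] full g(2) e(3) by metis
    then have "is_link X V h (M r) (M q)"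
      using q(2) alpha_limit_meets[OF \<open>finite (range e)\<close> e(2)]
      unfolding is_link_def by blast
    then show ?thesis using adm q(1) assms(5,6) unfolding admissible_preorder_def by blast
  qed
  ultimately have "r \<in> Q"
    using assms(4,6) p(1) q(1) unfolding convex_wrt_def by blast
  then show False using assms(6) by blast
qed

theorem lemma4p12:
  fixes X :: "'a topology" and V :: "'a set set"
    and P :: "'p set" and M :: "'p \<Rightarrow> 'a set" and leq :: "'p \<Rightarrow> 'p \<Rightarrow> bool"
  assumes "finite (topspace X)" and "t0_space X"
    and "multivector_field X V"
    and "invariant X V (topspace X)"
    and "morse_predecomposition X V P M"
    and "admissible_preorder X V P M leq"
  shows "(\<forall>Q. Q \<subseteq> P \<longrightarrow> saturated X V (M_Q X V P M Q) \<and> isolated_invariant X V (M_Q X V P M Q)) \<and>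
         (\<forall>Q. Q \<subseteq> P \<and> convex_wrt P leq Q \<longrightarrow> (\<forall>r\<in>P - Q. M_Q X V P M Q \<inter> M r = {}))"
  using saturated_M_Q[OF assms(1)] isolated_invariant_M_Q[OF assms(3)]
    M_Q_disjoint_if_convex[OF assms(1,5,6)]
  by blast

end
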